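(* Let $p(x,y)$ be a real polynomial with $p(0,0)=0$, $\nabla p(0,0)=(0,0)$, $\dim \operatorname{Co}N_p=2$, and such that for every $A\in\mathbb{N}^2$ the main $A$-quasi-homogeneous form of $p$ is nonnegative on $\mathbb{R}^2$ (in particular, for every corner point $(\alpha,\beta)$ of $\operatorname{Co}N_p$ that is Pareto-minimal in $N_p$, the coefficient of $x^\alpha y^\beta$ in $p$ is positive and $\alpha,\beta$ are even). Then: (i) if $\mathcal{A}_p=\emptyset$, then $(0,0)$ is a point of local minimum of $p$; (ii) if there exists $A\in\mathcal{A}_p$ for which condition $(C1)_A$ holds, then $(0,0)$ is not a point of local minimum of $p$; (iii) if $\mathcal{A}_p\neq\emptyset$ and for every $A\in\mathcal{A}_p$ condition $(C1)_A$ fails and condition $(C2)_A$ holds, then $(0,0)$ is a point of local minimum of $p$.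
   Context: $\mathbb{N}=\{1,2,\dots\}$; $\mathbb{N}_0^2$ is the set of $(A_1,A_2)\in\mathbb{N}^2$ with $\gcd(A_1,A_2)=1$. For a real polynomial $p(x,y)=\sum c_{\alpha\beta}x^\alpha y^\beta$, its support is $N_p=\{(\alpha,\beta)\in(\mathbb{N}\cup\{0\})^2: c_{\alpha\beta}\neq 0\}$ and $\operatorname{Co}N_p$ is its convex hull. For $A\in\mathbb{N}^2$, the main $A$-quasi-homogeneous form of $p$ is the sum of the terms of $p$ whose exponent vectors $k$ minimize $\langle A,k\rangle$ over $N_p$. For $A\in\mathbb{N}_0^2$, let $B_1^A<\dots<B_{r_A}^A$ be the distinct values of $\langle A,k\rangle$, $k\in N_p$, and let $\varphi_i^A$ be the sum of the terms of $p$ with $\langle A,k\rangle=B_i^A$; so $p=\varphi_1^A+\dots+\varphi_{r_A}^A$ and $\varphi_1^A$ is the main $A$-quasi-homogeneous form. If $\varphi=\sum_{i=1}^s a_ix^{\alpha_i}y^{\beta_i}$ ($a_i\neq0$, $\alpha_1>\dots>\alpha_s$) is one of these forms, its characteristic polynomial is $g(u)=\sum_i a_iu^{(\alpha_1-\alpha_i)/A_2}$ (the exponents are nonnegative integers). Let $g_1^A$ be the characteristic polynomial of $\varphi_1^A$. $\mathcal{A}_p$ is the set of $A\in\mathbb{N}_0^2$ such that $\varphi_1^A$ has at least three terms, $g_1^A(u)\ge0$ for all real $u$, and $g_1^A$ has at least one real root. For a function $\varphi$, $H_\varphi=\{(x,y)\in\mathbb{R}^2:\varphi(x,y)=0\}$.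 Condition $(C1)_A$: there is $(x_0,y_0)\in H_{\varphi_1^A}$ with $\varphi_2^A(x_0,y_0)<0$. Condition $(C2)_A$: for all $(x,y)\in H_{\varphi_1^A}$ with $x\neq0$, $y\neq0$ one has $\varphi_2^A(x,y)>0$. Local minimum at $(0,0)$ means $p(x,y)\ge p(0,0)$ in a neighborhood of $(0,0)$. *)

theory Defs
  imports "HOL-Analysis.Analysis" "HOL-Computational_Algebra.Polynomial"
begin

text \<open>A real polynomial p(x,y) is represented by its coefficient function
  c :: nat \<times> nat \<Rightarrow> real (coefficient of x^a y^b at (a,b)), with finite support.\<close>

definition supp2 :: "(nat \<times> nat \<Rightarrow> real) \<Rightarrow> (nat \<times> nat) set" where
  "supp2 c = {k. c k \<noteq> 0}"

definition is_poly2 :: "(nat \<times> nat \<Rightarrow> real) \<Rightarrow> bool" where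
  "is_poly2 c \<longleftrightarrow> finite (supp2 c)"

definition peval :: "(nat \<times> nat \<Rightarrow> real) \<Rightarrow> real \<Rightarrow> real \<Rightarrow> real" where
  "peval c x y = (\<Sum>k\<in>supp2 c. c k * x ^ fst k * y ^ snd k)"

definition newton_polygon :: "(nat \<times> nat \<Rightarrow> real) \<Rightarrow> (real \<times> real) set" where
  "newton_polygon c = convex hull ((\<lambda>k. (real (fst k), real (snd k))) ` supp2 c)"

definition wdeg :: "nat \<times> nat \<Rightarrow> nat \<times> nat \<Rightarrow> nat" where
  "wdeg A k = fst A * fst k + snd A * snd k"

definition qh_part :: "(nat \<times> nat \<Rightarrow> real) \<Rightarrow> nat \<times> nat \<Rightarrow> nat \<Rightarrow> (nat \<times> nat \<Rightarrow> real)" where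
  "qh_part c A B = (\<lambda>k. if wdeg A k = B then c k else 0)"

definition main_form :: "(nat \<times> nat \<Rightarrow> real) \<Rightarrow> nat \<times> nat \<Rightarrow> (nat \<times> nat \<Rightarrow> real)" where
  "main_form c A = qh_part c A (Min (wdeg A ` supp2 c))"

text \<open>The values B_1^A < ... < B_r^A (as a 0-indexed sorted list) and the forms phi_i^A
  (phi_form c A i is the paper's phi_{i+1}^A).\<close>
definition levels :: "(nat \<times> nat \<Rightarrow> real) \<Rightarrow> nat \<times> nat \<Rightarrow> nat list" where
  "levels c A = sorted_list_of_set (wdeg A ` supp2 c)"

definition phi_form :: "(nat \<times> nat \<Rightarrow> real) \<Rightarrow> nat \<times> nat \<Rightarrow> nat \<Rightarrow> (nat \<times> nat \<Rightarrow> real)" where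
  "phi_form c A i = qh_part c A (levels c A ! i)"

definition char_poly :: "(nat \<times> nat \<Rightarrow> real) \<Rightarrow> nat \<times> nat \<Rightarrow> real poly" where
  "char_poly \<phi> A = (let a1 = Max (fst ` supp2 \<phi>) in
     (\<Sum>k\<in>supp2 \<phi>. monom (\<phi> k) ((a1 - fst k) div snd A)))"

definition N0sq :: "(nat \<times> nat) set" where
  "N0sq = {A. fst A \<ge> 1 \<and> snd A \<ge> 1 \<and> coprime (fst A) (snd A)}"

definition calA :: "(nat \<times> nat \<Rightarrow> real) \<Rightarrow> (nat \<times> nat) set" where
  "calA c = {A \<in> N0sq.
     card (supp2 (phi_form c A 0)) \<ge> 3 \<and>
     (\<forall>u::real. poly (char_poly (phi_form c A 0) A) u \<ge> 0) \<and>
     (\<exists>u::real. poly (char_poly (phi_form c A 0) A) u = 0)}"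

definition C1 :: "(nat \<times> nat \<Rightarrow> real) \<Rightarrow> nat \<times> nat \<Rightarrow> bool" where
  "C1 c A \<longleftrightarrow> (\<exists>x0 y0. peval (phi_form c A 0) x0 y0 = 0 \<and> peval (phi_form c A 1) x0 y0 < 0)"

definition C2 :: "(nat \<times> nat \<Rightarrow> real) \<Rightarrow> nat \<times> nat \<Rightarrow> bool" where
  "C2 c A \<longleftrightarrow> (\<forall>x y. peval (phi_form c A 0) x y = 0 \<and> x \<noteq> 0 \<and> y \<noteq> 0
                  \<longrightarrow> peval (phi_form c A 1) x y > 0)"

definition local_min_origin :: "(nat \<times> nat \<Rightarrow> real) \<Rightarrow> bool" where
  "local_min_origin c \<longleftrightarrow>
     (\<forall>\<^sub>F z in nhds (0::real, 0::real). peval c (fst z) (snd z) \<ge> peval c 0 0)"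

end

theory Submission
  imports Defs
begin

text \<open>
  Suppose the origin is not a local minimum and pick points \<open>(x\<^sub>n, y\<^sub>n) \<rightarrow> 0\<close> off the axes
  with \<open>p(x\<^sub>n, y\<^sub>n) < 0\<close>. Along a subsequence the signs of the coordinates are constant, one
  monomial \<open>k\<^sub>0\<close> is largest in absolute value, and every ratio \<open>|x\<^sup>a y\<^sup>b| / |x\<^sup>a\<^sup>0 y\<^sup>b\<^sup>0|\<close>
  converges. If all these ratios tend to \<open>0\<close>, the term of \<open>k\<^sub>0\<close> dominates; taking logarithms of
  \<open>|x\<^sub>n|, |y\<^sub>n|\<close> as weights shows that \<open>k\<^sub>0\<close> is a lower vertex of the Newton polygon, so its
  coefficient is positive and its exponents are even, and \<open>p(x\<^sub>n, y\<^sub>n) > 0\<close> eventually.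
  Otherwise some ratio has a positive limit, which forces the sequence onto a weighted curve
  \<open>x = l\<^sup>A\<^sup>1 \<sigma>, y = l\<^sup>A\<^sup>2 (y\<^sub>0 + o(1))\<close> with coprime \<open>A\<close>. Then \<open>(\<sigma>, y\<^sub>0)\<close> is a zero off the axes of
  the nonnegative main form \<open>\<phi>\<^sub>1\<close>, which puts \<open>A\<close> into \<open>\<A>\<^sub>p\<close>; by (C2) the expansion
  \<open>p = l\<^sup>B\<^sup>1 \<phi>\<^sub>1 + l\<^sup>B\<^sup>2 (\<phi>\<^sub>2 + o(1))\<close> is positive, a contradiction. This proves (i) and (iii).
  For (ii), the same expansion along \<open>(l\<^sup>A\<^sup>1 x\<^sub>0, l\<^sup>A\<^sup>2 y\<^sub>0)\<close>, with \<open>\<phi>\<^sub>1(x\<^sub>0, y\<^sub>0) = 0 > \<phi>\<^sub>2(x\<^sub>0, y\<^sub>0)\<close>,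
  gives negative values of \<open>p\<close> arbitrarily close to the origin.
\<close>

section \<open>Quasi-homogeneous forms along weighted curves\<close>

lemma supp2_qh_part: "supp2 (qh_part c A B) = {k \<in> supp2 c. wdeg A k = B}"
  by (auto simp: supp2_def qh_part_def)

lemma supp2_diff_qh_part: "supp2 (c - qh_part c A B) = {k \<in> supp2 c. wdeg A k \<noteq> B}"
  by (auto simp: supp2_def qh_part_def)

lemma qh_part_diff_qh_part: "B' \<noteq> B \<Longrightarrow> qh_part (c - qh_part c A B) A B' = qh_part c A B'"
  by (auto simp: qh_part_def)

lemma peval_qh_part:
  "peval (qh_part c A B) x y = (\<Sum>k | k \<in> supp2 c \<and> wdeg A k = B. c k * x ^ fst k * y ^ snd k)"
  unfolding peval_def supp2_qh_part by (rule sum.cong) (auto simp: qh_part_def)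

lemma peval_diff_qh_part:
  assumes "finite (supp2 c)"
  shows "peval (c - qh_part c A B) x y = peval c x y - peval (qh_part c A B) x y"
proof -
  have "peval d x y = (\<Sum>k\<in>supp2 c. d k * x ^ fst k * y ^ snd k)" if "supp2 d \<subseteq> supp2 c" for d
    unfolding peval_def by (rule sum.mono_neutral_left) (use assms that in \<open>auto simp: supp2_def\<close>)
  then show ?thesis
    by (simp add: supp2_diff_qh_part supp2_qh_part Collect_mono_iff sum_subtractf[symmetric]
        left_diff_distrib)
qed

lemma monomial_scale:
  "(l ^ fst A * x) ^ fst k * (l ^ snd A * y) ^ snd k = l ^ wdeg A k * (x ^ fst k * y ^ snd k)"
  for l x y :: real
  by (simp add: wdeg_def power_mult_distrib power_add mult_ac flip: power_mult)

lemma peval_scale: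
  "peval c (l ^ fst A * x) (l ^ snd A * y) = (\<Sum>k\<in>supp2 c. c k * l ^ wdeg A k * x ^ fst k * y ^ snd k)"
  unfolding peval_def mult.assoc monomial_scale by (simp add: mult_ac)

lemma peval_qh_part_scale:
  "peval (qh_part c A B) (l ^ fst A * x) (l ^ snd A * y) = l ^ B * peval (qh_part c A B) x y"
proof -
  let ?q = "qh_part c A B"
  have "peval ?q (l ^ fst A * x) (l ^ snd A * y)
      = (\<Sum>k\<in>supp2 ?q. ?q k * l ^ wdeg A k * x ^ fst k * y ^ snd k)"
    by (rule peval_scale)
  also have "\<dots> = (\<Sum>k\<in>supp2 ?q. l ^ B * (?q k * x ^ fst k * y ^ snd k))"
    by (rule sum.cong) (auto simp: supp2_qh_part)
  finally show ?thesis by (simp add: peval_def sum_distrib_left)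
qed

lemma continuous_on_peval: "continuous_on UNIV (\<lambda>z. peval c (fst z) (snd z))"
  unfolding peval_def by (intro continuous_intros)

lemma levels_nth_le: "i \<le> j \<Longrightarrow> j < length (levels c A) \<Longrightarrow> levels c A ! i \<le> levels c A ! j"
  unfolding levels_def by (rule sorted_nth_mono) simp_all

lemma wdeg_in_levels:
  assumes "finite (supp2 c)" "k \<in> supp2 c"
  obtains i where "i < length (levels c A)" "levels c A ! i = wdeg A k"
  using assms by (metis image_eqI in_set_conv_nth levels_def set_sorted_list_of_set finite_imageI)

lemma levels_0_le:
  assumes "finite (supp2 c)" "k \<in> supp2 c"
  shows "levels c A ! 0 \<le> wdeg A k"
  using levels_nth_le by (metis wdeg_in_levels[OF assms] le0)

lemma levels_1_le:
  assumes "finite (supp2 c)" "k \<in> supp2 c" "wdeg A k \<noteq> levels c A ! 0"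
  shows "levels c A ! 1 \<le> wdeg A k"
  using levels_nth_le wdeg_in_levels[OF assms(1,2)] assms(3)
  by (metis One_nat_def Suc_leI neq0_conv)

lemma levels_0_less_1: "1 < length (levels c A) \<Longrightarrow> levels c A ! 0 < levels c A ! 1"
  unfolding levels_def by (rule sorted_wrt_nth_less) simp_all

lemma phi_form_0_eq_main_form:
  assumes "finite (supp2 c)"
  shows "phi_form c A 0 = main_form c A"
proof (cases "supp2 c = {}")
  case True
  then show ?thesis by (auto simp: phi_form_def main_form_def qh_part_def supp2_def)
next
  case False
  then show ?thesis
    using assms by (simp add: phi_form_def main_form_def levels_def sorted_list_of_set_nonempty)
qed

lemma main_form_eq_self:
  assumes fin: "finite (supp2 c)" and one: "length (levels c A) \<le> 1"
  shows "main_form c A = c"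
proof
  fix k
  show "main_form c A k = c k"
  proof (cases "k \<in> supp2 c")
    case True
    then obtain i where "i < length (levels c A)" "levels c A ! i = wdeg A k"
      using fin wdeg_in_levels by metis
    with one have "wdeg A k = levels c A ! 0" by (metis less_one order_less_le_trans)
    then show ?thesis
      by (simp add: phi_form_0_eq_main_form[OF fin, symmetric] phi_form_def qh_part_def)
  qed (simp add: main_form_def qh_part_def supp2_def)
qed

lemma tendsto_peval_scaled:
  fixes l x y :: "nat \<Rightarrow> real"
  assumes fin: "finite (supp2 c)" and ge: "\<And>k. k \<in> supp2 c \<Longrightarrow> B \<le> wdeg A k"
    and l: "l \<longlonglongrightarrow> 0" "\<And>n. l n \<noteq> 0" and x: "x \<longlonglongrightarrow> x0" and y: "y \<longlonglongrightarrow> y0"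
  shows "(\<lambda>n. peval c (l n ^ fst A * x n) (l n ^ snd A * y n) / l n ^ B)
           \<longlonglongrightarrow> peval (qh_part c A B) x0 y0"
proof -
  have "peval c (l n ^ fst A * x n) (l n ^ snd A * y n) / l n ^ B
      = (\<Sum>k\<in>supp2 c. c k * l n ^ (wdeg A k - B) * x n ^ fst k * y n ^ snd k)" for n
    unfolding peval_scale sum_divide_distrib
    by (rule sum.cong) (simp_all add: ge l(2) power_diff)
  moreover have "(\<lambda>n. \<Sum>k\<in>supp2 c. c k * l n ^ (wdeg A k - B) * x n ^ fst k * y n ^ snd k)
      \<longlonglongrightarrow> (\<Sum>k\<in>supp2 c. c k * 0 ^ (wdeg A k - B) * x0 ^ fst k * y0 ^ snd k)"
    by (intro tendsto_intros l x y)
  moreover have "(\<Sum>k\<in>supp2 c. c k * 0 ^ (wdeg A k - B) * x0 ^ fst k * y0 ^ snd k)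
      = peval (qh_part c A B) x0 y0"
    unfolding peval_qh_part sum.inter_filter[OF fin]
  proof (rule sum.cong[OF refl])
    fix k assume "k \<in> supp2 c"
    then have "B \<le> wdeg A k" by (rule ge)
    then show "c k * 0 ^ (wdeg A k - B) * x0 ^ fst k * y0 ^ snd k
        = (if wdeg A k = B then c k * x0 ^ fst k * y0 ^ snd k else 0)"
      by (cases "wdeg A k = B") simp_all
  qed
  ultimately show ?thesis by simp
qed

lemma tendsto_peval_first_level:
  fixes l x y :: "nat \<Rightarrow> real"
  assumes "finite (supp2 c)" "l \<longlonglongrightarrow> 0" "\<And>n. l n \<noteq> 0" "x \<longlonglongrightarrow> x0" "y \<longlonglongrightarrow> y0"
  shows "(\<lambda>n. peval c (l n ^ fst A * x n) (l n ^ snd A * y n) / l n ^ (levels c A ! 0))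
           \<longlonglongrightarrow> peval (phi_form c A 0) x0 y0"
  unfolding phi_form_def using assms levels_0_le by (intro tendsto_peval_scaled) blast+

lemma tendsto_peval_second_level:
  fixes l x y :: "nat \<Rightarrow> real"
  assumes fin: "finite (supp2 c)" and two: "1 < length (levels c A)"
    and "l \<longlonglongrightarrow> 0" "\<And>n. l n \<noteq> 0" "x \<longlonglongrightarrow> x0" "y \<longlonglongrightarrow> y0"
  shows "(\<lambda>n. (peval c (l n ^ fst A * x n) (l n ^ snd A * y n)
                - l n ^ (levels c A ! 0) * peval (phi_form c A 0) (x n) (y n)) / l n ^ (levels c A ! 1))
           \<longlonglongrightarrow> peval (phi_form c A 1) x0 y0"
proof -
  define B1 where "B1 = levels c A ! 0"
  define B2 where "B2 = levels c A ! 1"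
  define c' where "c' = c - qh_part c A B1"
  have fin': "finite (supp2 c')" using fin by (simp add: c'_def supp2_diff_qh_part)
  have "peval c (l n ^ fst A * x n) (l n ^ snd A * y n) - l n ^ B1 * peval (phi_form c A 0) (x n) (y n)
      = peval c' (l n ^ fst A * x n) (l n ^ snd A * y n)" for n
    by (simp add: c'_def peval_diff_qh_part[OF fin] peval_qh_part_scale phi_form_def B1_def)
  moreover have "qh_part c' A B2 = phi_form c A 1"
    using levels_0_less_1[OF two] by (simp add: c'_def B1_def B2_def phi_form_def qh_part_diff_qh_part)
  moreover have "(\<lambda>n. peval c' (l n ^ fst A * x n) (l n ^ snd A * y n) / l n ^ B2)
      \<longlonglongrightarrow> peval (qh_part c' A B2) x0 y0"
    by (rule tendsto_peval_scaled[OF fin' _ assms(3-)])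
      (use levels_1_le[OF fin] in \<open>simp add: c'_def supp2_diff_qh_part B1_def B2_def\<close>)
  ultimately show ?thesis by (simp add: B1_def B2_def)
qed

lemma C1_imp_two_levels:
  assumes fin: "finite (supp2 c)" and "C1 c A"
  shows "1 < length (levels c A)"
proof -
  obtain x0 y0 where z: "peval (phi_form c A 0) x0 y0 = 0" and neg: "peval (phi_form c A 1) x0 y0 < 0"
    using \<open>C1 c A\<close> by (auto simp: C1_def)
  have "{k \<in> supp2 c. wdeg A k = levels c A ! 1} \<noteq> {}"
  proof
    assume none: "{k \<in> supp2 c. wdeg A k = levels c A ! 1} = {}"
    have "peval (phi_form c A 1) x0 y0 = 0"
      unfolding phi_form_def peval_qh_part none by simp
    with neg show False by simp
  qed
  then obtain k where "k \<in> supp2 c" "wdeg A k = levels c A ! 1" by blast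
  then obtain i where "i < length (levels c A)" "levels c A ! i = levels c A ! 1"
    using fin by (metis wdeg_in_levels)
  moreover have "phi_form c A 1 \<noteq> phi_form c A 0" using z neg by auto
  ultimately show ?thesis by (cases i) (auto simp: phi_form_def)
qed

lemma C1_imp_not_local_min_origin:
  assumes fin: "finite (supp2 c)" and zero: "peval c 0 0 = 0"
    and A: "1 \<le> fst A" "1 \<le> snd A" and "C1 c A"
  shows "\<not> local_min_origin c"
proof
  assume min: "local_min_origin c"
  obtain x0 y0 where z: "peval (phi_form c A 0) x0 y0 = 0" and neg: "peval (phi_form c A 1) x0 y0 < 0"
    using \<open>C1 c A\<close> by (auto simp: C1_def)
  define l :: "nat \<Rightarrow> real" where "l n = inverse (real (Suc n))" for n
  have l: "l \<longlonglongrightarrow> 0" "\<And>n. l n > 0"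
    unfolding l_def by (rule LIMSEQ_inverse_real_of_nat) simp
  define z where "z n = (l n ^ fst A * x0, l n ^ snd A * y0)" for n
  have "z \<longlonglongrightarrow> (0 ^ fst A * x0, 0 ^ snd A * y0)"
    unfolding z_def by (intro tendsto_intros l)
  then have "z \<longlonglongrightarrow> (0, 0)" using A by (simp add: power_0_left)
  with min have "\<forall>\<^sub>F n in sequentially. 0 \<le> peval c (fst (z n)) (snd (z n))"
    unfolding local_min_origin_def zero by (rule eventually_compose_filterlim)
  moreover have "(\<lambda>n. peval c (fst (z n)) (snd (z n)) / l n ^ (levels c A ! 1))
      \<longlonglongrightarrow> peval (phi_form c A 1) x0 y0"
    using tendsto_peval_second_level[OF fin C1_imp_two_levels[OF fin \<open>C1 c A\<close>] l(1)
        less_imp_neq[OF l(2), symmetric] tendsto_const[of x0] tendsto_const[of y0]]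
    by (simp add: z_def z)
  then have "\<forall>\<^sub>F n in sequentially. peval c (fst (z n)) (snd (z n)) / l n ^ (levels c A ! 1) < 0"
    using neg by (rule order_tendstoD)
  ultimately have "\<forall>\<^sub>F n in sequentially. False"
    by eventually_elim (metis divide_nonneg_pos l(2) zero_less_power not_less)
  then show False by simp
qed

section \<open>Lower vertices of the Newton polygon\<close>

lemma wdeg_tilt:
  assumes "1 \<le> M * fst A"
  shows "wdeg (M * fst A - 1, M * snd A) k + fst k = M * wdeg A k"
proof -
  have "1 * fst k \<le> M * fst A * fst k" using assms by (rule mult_le_mono1)
  moreover have "wdeg (M * fst A - 1, M * snd A) k = M * fst A * fst k - 1 * fst k + M * snd A * snd k"
    by (simp add: wdeg_def diff_mult_distrib)
  moreover have "M * wdeg A k = M * fst A * fst k + M * snd A * snd k"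
    by (simp add: wdeg_def algebra_simps)
  ultimately show ?thesis by linarith
qed

lemma wdeg_fst_eq_imp_eq: "0 < snd A \<Longrightarrow> wdeg A k = wdeg A k' \<Longrightarrow> fst k = fst k' \<Longrightarrow> k = k'"
  by (simp add: wdeg_def prod_eq_iff)

text \<open>The corner points of the Newton polygon that are Pareto-minimal in the support are
  exactly the exponents singled out by a weight with positive integer entries.\<close>

definition lower_vertex :: "(nat \<times> nat \<Rightarrow> real) \<Rightarrow> nat \<times> nat \<Rightarrow> bool" where
  "lower_vertex c k0 \<longleftrightarrow> k0 \<in> supp2 c \<and>
     (\<exists>A. 1 \<le> fst A \<and> 1 \<le> snd A \<and> (\<forall>k\<in>supp2 c. k \<noteq> k0 \<longrightarrow> wdeg A k0 < wdeg A k))"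

lemma peval_main_form_unique_min:
  assumes "finite (supp2 c)" "k0 \<in> supp2 c" "\<forall>k\<in>supp2 c. k \<noteq> k0 \<longrightarrow> wdeg A k0 < wdeg A k"
  shows "peval (main_form c A) x y = c k0 * x ^ fst k0 * y ^ snd k0"
proof -
  have "Min (wdeg A ` supp2 c) = wdeg A k0"
    using assms by (intro Min_eqI) force+
  moreover have "{k \<in> supp2 c. wdeg A k = wdeg A k0} = {k0}"
    using assms(2,3) by force
  ultimately show ?thesis by (simp add: main_form_def peval_qh_part)
qed

lemma lower_vertex_of_real_weights:
  fixes s t :: real
  assumes fin: "finite (supp2 c)" and k0: "k0 \<in> supp2 c" and pos: "0 < s" "0 < t"
    and less: "\<And>k. k \<in> supp2 c \<Longrightarrow> k \<noteq> k0 \<Longrightarrow>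
      real (fst k0) * s + real (snd k0) * t < real (fst k) * s + real (snd k) * t"
  shows "lower_vertex c k0"
proof -
  define d where "d k = (real (fst k) * s + real (snd k) * t) - (real (fst k0) * s + real (snd k0) * t)"
    for k :: "nat \<times> nat"
  define C where "C = real (fst k0 + snd k0)"
  define N where "N = 1 + (\<Sum>k\<in>supp2 c - {k0}. C / d k)"
  have d: "0 < d k" if "k \<in> supp2 c - {k0}" for k
    using less that by (simp add: d_def)
  have sum: "0 \<le> (\<Sum>k\<in>supp2 c - {k0}. C / d k)"
    by (rule sum_nonneg) (use d in \<open>simp add: C_def less_imp_le\<close>)
  have gap: "C < N * d k" if "k \<in> supp2 c - {k0}" for k
  proof -
    have "C / d k \<le> (\<Sum>k\<in>supp2 c - {k0}. C / d k)"
      by (rule member_le_sum) (use fin that d in \<open>auto simp: C_def less_imp_le\<close>)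
    then have "C / d k < N" by (simp add: N_def)
    then show ?thesis using d[OF that] by (simp add: divide_less_eq)
  qed
  text \<open>Scale the weights by \<open>N\<close> and round up: rounding costs at most \<open>C\<close> on the
    monomial \<open>k0\<close> and can only help on the others.\<close>
  define A where "A = (nat \<lceil>N * s\<rceil>, nat \<lceil>N * t\<rceil>)"
  have Ns: "0 < N * s" and Nt: "0 < N * t" using sum pos by (simp_all add: N_def)
  have A: "N * s \<le> fst A" "fst A \<le> N * s + 1" "N * t \<le> snd A" "snd A \<le> N * t + 1"
    using Ns Nt by (simp_all add: A_def)
  have A_ge: "1 \<le> fst A" "1 \<le> snd A"
    using Ns Nt by (simp_all add: A_def Suc_le_eq)
  have lower: "N * (real (fst k) * s + real (snd k) * t) \<le> real (wdeg A k)" for k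
    using mult_right_mono[OF A(1), of "real (fst k)"] mult_right_mono[OF A(3), of "real (snd k)"]
    by (simp add: wdeg_def algebra_simps)
  have upper: "real (wdeg A k0) \<le> N * (real (fst k0) * s + real (snd k0) * t) + C"
    using mult_right_mono[OF A(2), of "real (fst k0)"] mult_right_mono[OF A(4), of "real (snd k0)"]
    by (simp add: wdeg_def C_def algebra_simps)
  have "wdeg A k0 < wdeg A k" if "k \<in> supp2 c" "k \<noteq> k0" for k
    using lower[of k] upper gap[of k] that by (simp add: d_def algebra_simps)
  then show ?thesis unfolding lower_vertex_def using k0 A_ge by blast
qed

lemma lower_vertex_main_form_max_fst:
  assumes fin: "finite (supp2 c)" and A: "1 \<le> fst A" "1 \<le> snd A"
    and k1: "k1 \<in> supp2 (main_form c A)"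
    and max: "\<forall>k\<in>supp2 (main_form c A). fst k \<le> fst k1"
  shows "lower_vertex c k1"
proof -
  define B where "B = Min (wdeg A ` supp2 c)"
  have F: "k \<in> supp2 (main_form c A) \<longleftrightarrow> k \<in> supp2 c \<and> wdeg A k = B" for k
    by (simp add: main_form_def supp2_qh_part B_def)
  have B_le: "B \<le> wdeg A k" if "k \<in> supp2 c" for k
    using fin that by (simp add: B_def)
  define M where "M = Max (fst ` supp2 c) + 2"
  have fst_less: "fst k < M" if "k \<in> supp2 c" for k
  proof -
    have "fst k \<le> Max (fst ` supp2 c)" using fin that by simp
    then show ?thesis by (simp add: M_def)
  qed
  have MA: "2 \<le> M * fst A" using A by (simp add: M_def)
  text \<open>Tilting the weight \<open>A\<close> towards the \<open>x\<close>-axis singles out the term of the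
    main form with the largest \<open>x\<close>-exponent.\<close>
  define A' where "A' = (M * fst A - 1, M * snd A)"
  have tilt: "wdeg A' k + fst k = M * wdeg A k" for k
    unfolding A'_def by (rule wdeg_tilt) (use MA in linarith)
  have k1_eq: "wdeg A' k1 + fst k1 = M * B" using tilt[of k1] k1 F by simp
  have "wdeg A' k1 < wdeg A' k" if k: "k \<in> supp2 c" "k \<noteq> k1" for k
  proof (cases "wdeg A k = B")
    case True
    then have "k \<in> supp2 (main_form c A)" using F k by simp
    moreover have "fst k \<noteq> fst k1"
      using wdeg_fst_eq_imp_eq[of A k k1] A True k1 F k(2) by auto
    ultimately have "fst k < fst k1" using max le_neq_implies_less by blast
    then show ?thesis using tilt[of k] k1_eq True by simp
  next
    case False
    then have "B + 1 \<le> wdeg A k" using B_le[OF k(1)] by simp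
    then have "M * (B + 1) \<le> M * wdeg A k" by (rule mult_le_mono2)
    then show ?thesis using tilt[of k] k1_eq fst_less[OF k(1)] by simp
  qed
  moreover have "1 \<le> fst A'" "1 \<le> snd A'"
    using MA A by (simp_all add: A'_def M_def)
  moreover have "k1 \<in> supp2 c" using k1 F by simp
  ultimately show ?thesis unfolding lower_vertex_def by blast
qed

section \<open>The characteristic polynomial of a quasi-homogeneous form\<close>

lemma coprime_weighted_eq:
  fixes A1 A2 a b a1 b1 :: nat
  assumes cop: "coprime A1 A2" and A2: "0 < A2"
    and eq: "A1 * a + A2 * b = A1 * a1 + A2 * b1" and le: "a \<le> a1"
  shows "a1 = a + A2 * ((a1 - a) div A2) \<and> b = b1 + A1 * ((a1 - a) div A2)"
proof -
  have eq': "A2 * b = A2 * b1 + A1 * (a1 - a)"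
    using eq le by (simp add: diff_mult_distrib2)
  then have "A2 * b1 \<le> A2 * b" by linarith
  then have b: "b1 \<le> b" using A2 by simp
  have diff: "A2 * (b - b1) = A1 * (a1 - a)"
    using eq' by (simp add: diff_mult_distrib2)
  then have "A2 dvd a1 - a"
    using cop by (metis coprime_commute coprime_dvd_mult_right_iff dvd_triv_left)
  then obtain m where m: "a1 - a = A2 * m" by blast
  with diff A2 have "b - b1 = A1 * m" by (simp add: mult.left_commute)
  with m b le A2 show ?thesis by (simp, arith)
qed

lemma ratio_of_powers_surj:
  fixes u :: real
  assumes cop: "coprime A1 A2" and "u \<noteq> 0"
  obtains x y where "x \<noteq> 0" "y \<noteq> 0" "y ^ A1 / x ^ A2 = u"
proof (cases "odd A1")
  case True
  then show ?thesis using \<open>u \<noteq> 0\<close> by (intro that[of 1 "root A1 u"]) (auto simp: odd_real_root_pow odd_pos)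
next
  case False
  then have "odd A2" using cop by (metis coprime_common_divisor_nat dvd_refl odd_one)
  then show ?thesis
    using \<open>u \<noteq> 0\<close> by (intro that[of "root A2 (1 / u)" 1]) (auto simp: odd_real_root_pow odd_pos)
qed

context
  fixes \<phi> :: "nat \<times> nat \<Rightarrow> real" and A k1 :: "nat \<times> nat"
  assumes fin: "finite (supp2 \<phi>)" and cop: "coprime (fst A) (snd A)" and A2: "0 < snd A"
    and qh: "\<forall>k\<in>supp2 \<phi>. wdeg A k = wdeg A k1"
    and k1: "k1 \<in> supp2 \<phi>" and max: "\<forall>k\<in>supp2 \<phi>. fst k \<le> fst k1"
begin

lemma char_poly_exponents:
  assumes "k \<in> supp2 \<phi>"
  shows "fst k1 = fst k + snd A * ((fst k1 - fst k) div snd A)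
    \<and> snd k = snd k1 + fst A * ((fst k1 - fst k) div snd A)"
  using coprime_weighted_eq[OF cop A2 _ bspec[OF max assms]] bspec[OF qh assms] by (simp add: wdeg_def)

lemma char_poly_exponent_eq_0_iff:
  assumes "k \<in> supp2 \<phi>"
  shows "(fst k1 - fst k) div snd A = 0 \<longleftrightarrow> k = k1"
  using char_poly_exponents[OF assms] by (auto simp: prod_eq_iff)

lemma char_poly_eq: "char_poly \<phi> A = (\<Sum>k\<in>supp2 \<phi>. monom (\<phi> k) ((fst k1 - fst k) div snd A))"
proof -
  have "Max (fst ` supp2 \<phi>) = fst k1"
    using fin k1 max by (intro Max_eqI) auto
  then show ?thesis by (simp add: char_poly_def)
qed

lemma peval_eq_char_poly:
  assumes "x \<noteq> 0"
  shows "peval \<phi> x y = x ^ fst k1 * y ^ snd k1 * poly (char_poly \<phi> A) (y ^ fst A / x ^ snd A)"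
proof -
  have "x ^ fst k * y ^ snd k = x ^ fst k1 * y ^ snd k1 * (y ^ fst A / x ^ snd A) ^ ((fst k1 - fst k) div snd A)"
    if "k \<in> supp2 \<phi>" for k
  proof -
    define j where "j = (fst k1 - fst k) div snd A"
    have e: "fst k1 = fst k + snd A * j" "snd k = snd k1 + fst A * j"
      using char_poly_exponents[OF that] by (simp_all add: j_def)
    have "x ^ fst k1 = x ^ fst k * (x ^ snd A) ^ j" "y ^ snd k = y ^ snd k1 * (y ^ fst A) ^ j"
      by (subst e, simp add: power_add power_mult)+
    then show ?thesis using assms by (simp add: j_def field_simps)
  qed
  then show ?thesis
    unfolding peval_def char_poly_eq poly_sum poly_monom sum_distrib_left
    by (intro sum.cong) (simp_all add: mult_ac)
qed

lemma poly_char_poly_0: "poly (char_poly \<phi> A) 0 = \<phi> k1"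
proof -
  have "poly (char_poly \<phi> A) 0 = (\<Sum>k\<in>supp2 \<phi>. if k = k1 then \<phi> k else 0)"
    unfolding char_poly_eq poly_sum poly_monom
    by (intro sum.cong) (simp_all add: char_poly_exponent_eq_0_iff power_0_left)
  then show ?thesis using fin k1 by simp
qed

lemma poly_char_poly_binomial:
  assumes "card (supp2 \<phi>) \<le> 2"
  obtains b j where "1 \<le> j" "\<And>u. poly (char_poly \<phi> A) u = \<phi> k1 + b * u ^ j"
proof (cases "supp2 \<phi> = {k1}")
  case True
  then show ?thesis by (intro that[of 1 0]) (simp_all add: char_poly_eq poly_monom)
next
  case False
  then obtain k2 where k2: "k2 \<in> supp2 \<phi>" "k2 \<noteq> k1" using k1 by blast
  have "card (supp2 \<phi> - {k1}) \<le> 1" using assms fin k1 by simp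
  then have "supp2 \<phi> - {k1} = {k2}"
    using k2 fin by (auto simp: card_le_Suc0_iff_eq)
  then have supp: "supp2 \<phi> = {k1, k2}" using k1 by blast
  show ?thesis
  proof (rule that)
    show "1 \<le> (fst k1 - fst k2) div snd A"
      using char_poly_exponent_eq_0_iff[OF k2(1)] k2(2) by simp
    show "poly (char_poly \<phi> A) u = \<phi> k1 + \<phi> k2 * u ^ ((fst k1 - fst k2) div snd A)" for u
      using k2(2) by (simp add: char_poly_eq supp poly_monom)
  qed
qed

end

lemma nonneg_binomial_has_no_root:
  fixes a b u0 :: real
  assumes "0 < a" "1 \<le> j" and nonneg: "\<And>u. 0 \<le> a + b * u ^ j"
  shows "a + b * u0 ^ j \<noteq> 0"
proof
  assume "a + b * u0 ^ j = 0"
  then have root: "b * u0 ^ j = - a" by linarith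
  have "(2::real) ^ 1 \<le> 2 ^ j" using \<open>1 \<le> j\<close> by (rule power_increasing) simp
  have "b * (2 * u0) ^ j = 2 ^ j * (b * u0 ^ j)"
    by (simp add: power_mult_distrib mult_ac)
  then have "a + b * (2 * u0) ^ j = a - 2 ^ j * a"
    using root by simp
  also have "\<dots> < 0" using \<open>0 < a\<close> \<open>2 ^ 1 \<le> 2 ^ j\<close> by simp
  finally show False using nonneg[of "2 * u0"] by simp
qed

section \<open>Polynomials with nonnegative main forms\<close>

locale nonneg_main_forms =
  fixes c :: "nat \<times> nat \<Rightarrow> real"
  assumes finite_supp2: "finite (supp2 c)"
    and main_form_nonneg: "\<And>A x y. 1 \<le> fst A \<Longrightarrow> 1 \<le> snd A \<Longrightarrow> 0 \<le> peval (main_form c A) x y"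
begin

lemma lower_vertex_pos_even:
  assumes "lower_vertex c k0"
  shows "0 < c k0 \<and> even (fst k0) \<and> even (snd k0)"
proof -
  obtain A where A: "1 \<le> fst A" "1 \<le> snd A" and k0: "k0 \<in> supp2 c"
    and min: "\<forall>k\<in>supp2 c. k \<noteq> k0 \<longrightarrow> wdeg A k0 < wdeg A k"
    using assms by (auto simp: lower_vertex_def)
  have term_nonneg: "0 \<le> c k0 * x ^ fst k0 * y ^ snd k0" for x y
    using main_form_nonneg[OF A, of x y] peval_main_form_unique_min[OF finite_supp2 k0 min] by simp
  have "c k0 \<noteq> 0" using k0 by (simp add: supp2_def)
  with term_nonneg[of 1 1] have pos: "0 < c k0" by simp
  have "0 \<le> (-1::real) ^ fst k0" "0 \<le> (-1::real) ^ snd k0"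
    using term_nonneg[of "-1" 1] term_nonneg[of 1 "-1"] pos by (simp_all add: zero_le_mult_iff)
  then show ?thesis using pos by (simp add: zero_le_power_eq)
qed

lemma main_form_max_fst_term:
  assumes A: "A \<in> N0sq" and ne: "supp2 c \<noteq> {}"
  obtains k1 where "k1 \<in> supp2 (main_form c A)" "\<forall>k\<in>supp2 (main_form c A). fst k \<le> fst k1"
    "\<forall>k\<in>supp2 (main_form c A). wdeg A k = wdeg A k1"
    "0 < main_form c A k1" "even (fst k1)" "even (snd k1)"
proof -
  define B where "B = Min (wdeg A ` supp2 c)"
  define F where "F = supp2 (main_form c A)"
  have F: "F = {k \<in> supp2 c. wdeg A k = B}"
    by (simp add: F_def main_form_def supp2_qh_part B_def)
  have "B \<in> wdeg A ` supp2 c" using finite_supp2 ne by (simp add: B_def)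
  then have "fst ` F \<noteq> {}" by (auto simp: F)
  moreover have fin: "finite F" using finite_supp2 by (simp add: F)
  ultimately have "Max (fst ` F) \<in> fst ` F" by (intro Max_in) auto
  then obtain k1 where k1: "k1 \<in> F" "fst k1 = Max (fst ` F)" by (metis imageE)
  have max: "\<forall>k\<in>F. fst k \<le> fst k1" using fin k1 by simp
  have "lower_vertex c k1"
    using A k1(1) max by (intro lower_vertex_main_form_max_fst[OF finite_supp2]) (auto simp: N0sq_def F_def)
  then have "0 < c k1" "even (fst k1)" "even (snd k1)"
    using lower_vertex_pos_even by blast+
  moreover have "main_form c A k1 = c k1" "\<forall>k\<in>F. wdeg A k = wdeg A k1"
    using k1(1) by (simp_all add: F main_form_def qh_part_def B_def)
  ultimately show ?thesis using that k1(1) max by (simp add: F_def)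
qed

lemma main_form_zero_imp_calA:
  assumes A: "A \<in> N0sq" and ne: "supp2 c \<noteq> {}" and xy: "x0 \<noteq> 0" "y0 \<noteq> 0"
    and zero: "peval (main_form c A) x0 y0 = 0"
  shows "A \<in> calA c"
proof -
  define \<phi> where "\<phi> = main_form c A"
  let ?g = "poly (char_poly \<phi> A)"
  have A1: "1 \<le> fst A" and A2: "0 < snd A" and cop: "coprime (fst A) (snd A)"
    using A by (auto simp: N0sq_def)
  have fin: "finite (supp2 \<phi>)"
    using finite_supp2 by (simp add: \<phi>_def main_form_def supp2_qh_part)
  obtain k1 where k1: "k1 \<in> supp2 \<phi>" and max: "\<forall>k\<in>supp2 \<phi>. fst k \<le> fst k1"
    and qh: "\<forall>k\<in>supp2 \<phi>. wdeg A k = wdeg A k1" and k1_pos: "0 < \<phi> k1"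
    and even: "even (fst k1)" "even (snd k1)"
    using main_form_max_fst_term[OF A ne] unfolding \<phi>_def by blast
  have mono_pos: "0 < x ^ fst k1 * y ^ snd k1" if "x \<noteq> 0" "y \<noteq> 0" for x y :: real
    using even that by (simp add: zero_less_power_eq)
  note peval_g = peval_eq_char_poly[OF fin cop A2 qh k1 max]
  have g_nonneg: "0 \<le> ?g u" for u
  proof (cases "u = 0")
    case False
    then obtain x y where xy: "x \<noteq> 0" "y \<noteq> 0" "y ^ fst A / x ^ snd A = u"
      using ratio_of_powers_surj[OF cop] by metis
    then have "0 \<le> x ^ fst k1 * y ^ snd k1 * ?g u"
      using main_form_nonneg[OF A1, of x y] A2 peval_g[OF xy(1), of y] by (simp add: \<phi>_def)
    then show ?thesis using mono_pos[OF xy(1,2)] by (simp add: zero_le_mult_iff)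
  qed (use poly_char_poly_0[OF fin cop A2 qh k1 max] k1_pos in simp)
  have g_root: "?g (y0 ^ fst A / x0 ^ snd A) = 0"
    using zero peval_g[OF xy(1)] mono_pos[OF xy] xy by (simp add: \<phi>_def)
  have "3 \<le> card (supp2 \<phi>)"
  proof (rule ccontr)
    assume "\<not> 3 \<le> card (supp2 \<phi>)"
    then have "card (supp2 \<phi>) \<le> 2" by simp
    then obtain b j where "1 \<le> j" "\<And>u. ?g u = \<phi> k1 + b * u ^ j"
      using poly_char_poly_binomial[OF fin cop A2 qh k1 max] by blast
    then show False
      using nonneg_binomial_has_no_root[OF k1_pos] g_nonneg g_root by metis
  qed
  then show ?thesis
    using A g_nonneg g_root by (auto simp: calA_def phi_form_0_eq_main_form[OF finite_supp2] \<phi>_def)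
qed

lemma main_form_zero_of_neg_along_curve:
  fixes l y :: "nat \<Rightarrow> real"
  assumes A: "1 \<le> fst A" "1 \<le> snd A" and l: "l \<longlonglongrightarrow> 0" "\<And>n. 0 < l n" and y: "y \<longlonglongrightarrow> y0"
    and neg: "\<And>n. peval c (l n ^ fst A * x0) (l n ^ snd A * y n) < 0"
  shows "peval (main_form c A) x0 y0 = 0"
proof -
  let ?p = "\<lambda>n. peval c (l n ^ fst A * x0) (l n ^ snd A * y n)"
  have first: "(\<lambda>n. ?p n / l n ^ (levels c A ! 0)) \<longlonglongrightarrow> peval (phi_form c A 0) x0 y0"
    using l(2) less_imp_neq[symmetric]
    by (intro tendsto_peval_first_level[OF finite_supp2 l(1) _ tendsto_const y]) blast
  have "?p n / l n ^ (levels c A ! 0) < 0" for n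
    using neg l(2) by (simp add: divide_neg_pos)
  then have "peval (phi_form c A 0) x0 y0 \<le> 0"
    by (intro tendsto_upperbound[OF first] always_eventually) (simp_all add: less_imp_le)
  then show ?thesis
    using main_form_nonneg[OF A, of x0 y0] by (simp add: phi_form_0_eq_main_form[OF finite_supp2])
qed

lemma eventually_pos_of_second_level_pos:
  fixes l y :: "nat \<Rightarrow> real"
  assumes two: "1 < length (levels c A)" and A: "1 \<le> fst A" "1 \<le> snd A"
    and l: "l \<longlonglongrightarrow> 0" "\<And>n. 0 < l n" and y: "y \<longlonglongrightarrow> y0"
    and pos: "0 < peval (phi_form c A 1) x0 y0"
  shows "\<forall>\<^sub>F n in sequentially. 0 < peval c (l n ^ fst A * x0) (l n ^ snd A * y n)"
proof -
  let ?p = "\<lambda>n. peval c (l n ^ fst A * x0) (l n ^ snd A * y n)"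
  let ?q = "\<lambda>n. l n ^ (levels c A ! 0) * peval (phi_form c A 0) x0 (y n)"
  have l_nz: "l n \<noteq> 0" for n using l(2)[of n] by simp
  have "(\<lambda>n. (?p n - ?q n) / l n ^ (levels c A ! 1)) \<longlonglongrightarrow> peval (phi_form c A 1) x0 y0"
    by (rule tendsto_peval_second_level[OF finite_supp2 two l(1) l_nz tendsto_const y])
  then have "\<forall>\<^sub>F n in sequentially. 0 < (?p n - ?q n) / l n ^ (levels c A ! 1)"
    using pos by (rule order_tendstoD)
  then show ?thesis
  proof eventually_elim
    case (elim n)
    then have "?q n < ?p n" using l(2)[of n] by (simp add: zero_less_divide_iff)
    moreover have "0 \<le> ?q n"
      using l(2)[of n] main_form_nonneg[OF A] by (simp add: phi_form_0_eq_main_form[OF finite_supp2])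
    ultimately show ?case by linarith
  qed
qed

end

section \<open>Sequences approaching the origin\<close>

lemma off_axes_near_negative:
  fixes f :: "real \<times> real \<Rightarrow> real"
  assumes cont: "continuous_on UNIV f" and neg: "f z < 0" and e: "0 < e"
  obtains w where "fst w \<noteq> 0" "snd w \<noteq> 0" "dist w z < e" "f w < 0"
proof -
  have lim: "((\<lambda>t. z + (t, t)) \<longlongrightarrow> z) (at (0::real))"
    by (auto intro!: tendsto_eq_intros simp: zero_prod_def)
  have "\<forall>\<^sub>F t in at 0. f (z + (t, t)) < 0"
    using continuous_on_tendsto_compose[OF cont lim] neg by (auto dest: order_tendstoD)
  moreover have "\<forall>\<^sub>F t in at 0. dist (z + (t, t)) z < e"
    using lim e by (rule tendstoD)
  moreover have "\<forall>\<^sub>F t in at 0. t \<noteq> - fst z" "\<forall>\<^sub>F t in at 0. t \<noteq> - snd z"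
    by (rule eventually_neq_at_within)+
  ultimately have "\<forall>\<^sub>F t in at (0::real).
      f (z + (t, t)) < 0 \<and> dist (z + (t, t)) z < e \<and> t \<noteq> - fst z \<and> t \<noteq> - snd z"
    by eventually_elim simp
  then obtain t where "f (z + (t, t)) < 0" "dist (z + (t, t)) z < e" "t \<noteq> - fst z" "t \<noteq> - snd z"
    using eventually_happens'[OF at_neq_bot] by blast
  then show ?thesis by (intro that[of "z + (t, t)"]) auto
qed

lemma constant_subseq_of_finite_range:
  fixes h :: "nat \<Rightarrow> 'a"
  assumes "finite (range h)"
  obtains r :: "nat \<Rightarrow> nat" and v where "strict_mono r" "\<And>n. h (r n) = v"
proof -
  obtain v where "infinite (h -` {v})"
    using inf_img_fin_domE[OF assms infinite_UNIV_nat] by blast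
  then obtain r :: "nat \<Rightarrow> nat" where "strict_mono r" "\<forall>n. r n \<in> h -` {v}"
    using infinite_enumerate by blast
  then show ?thesis using that[of r v] by simp
qed

lemma convergent_subseq_of_bounded_family:
  fixes f :: "'i \<Rightarrow> nat \<Rightarrow> real"
  assumes "finite I" "\<forall>i\<in>I. bounded (range (f i))"
  shows "\<exists>r. strict_mono r \<and> (\<forall>i\<in>I. convergent (f i \<circ> r))"
  using assms
proof (induction I rule: finite_induct)
  case empty
  show ?case by (intro exI[of _ id]) (simp add: strict_mono_def)
next
  case (insert i I)
  then have "\<forall>j\<in>I. bounded (range (f j))" by simp
  then obtain r where r: "strict_mono r" "\<forall>j\<in>I. convergent (f j \<circ> r)"
    using insert.IH by blast
  have "bounded (range (f i \<circ> r))"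
    by (rule bounded_subset[of "range (f i)"]) (use insert.prems in auto)
  then obtain l r' where r': "strict_mono r'" "(f i \<circ> r \<circ> r') \<longlonglongrightarrow> l"
    using bounded_imp_convergent_subsequence[OF \<open>bounded (range (f i \<circ> r))\<close>] by auto
  have "convergent (f j \<circ> (r \<circ> r'))" if j: "j \<in> insert i I" for j
  proof (cases "j = i")
    case True
    then show ?thesis using r'(2) by (auto simp: convergent_def o_assoc)
  next
    case False
    then obtain L where "(f j \<circ> r) \<longlonglongrightarrow> L" using j r(2) by (auto simp: convergent_def)
    from LIMSEQ_subseq_LIMSEQ[OF this r'(1)] show ?thesis by (auto simp: convergent_def o_assoc)
  qed
  then show ?case using strict_mono_o[OF r(1) r'(1)] by blast
qed

lemma filterlim_neg_ln_abs_at_top: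
  fixes X :: "nat \<Rightarrow> real"
  assumes "X \<longlonglongrightarrow> 0" "\<And>n. X n \<noteq> 0"
  shows "filterlim (\<lambda>n. - ln \<bar>X n\<bar>) at_top sequentially"
proof -
  have "filterlim (\<lambda>n. \<bar>X n\<bar>) (at_right 0) sequentially"
    using assms by (intro tendsto_imp_filterlim_at_right) (auto simp: tendsto_rabs_zero_iff)
  then have "filterlim (\<lambda>n. ln \<bar>X n\<bar>) at_bot sequentially"
    by (rule filterlim_compose[OF ln_at_0])
  then show ?thesis by (simp add: filterlim_uminus_at_top)
qed

lemma same_sign_comb_not_convergent:
  fixes a b :: int and s t :: "nat \<Rightarrow> real"
  assumes ab: "0 \<le> a * b" "(a, b) \<noteq> (0, 0)"
    and s: "filterlim s at_top sequentially" "\<And>n. 0 < s n"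
    and t: "filterlim t at_top sequentially" "\<And>n. 0 < t n"
  shows "\<not> convergent (\<lambda>n. a * s n + b * t n)"
proof -
  have abs_eq: "\<bar>a * s n + b * t n\<bar> = \<bar>a\<bar> * s n + \<bar>b\<bar> * t n" for n
  proof (cases "0 \<le> a \<and> 0 \<le> b")
    case True
    then have "0 \<le> a * s n" "0 \<le> b * t n" using s(2)[of n] t(2)[of n] by simp_all
    with True show ?thesis by simp
  next
    case False
    then have "a \<le> 0" "b \<le> 0" using ab(1) by (auto simp: zero_le_mult_iff)
    moreover from this have "a * s n \<le> 0" "b * t n \<le> 0"
      using s(2)[of n] t(2)[of n] by (simp_all add: mult_nonpos_nonneg)
    ultimately show ?thesis by simp
  qed
  have "filterlim (\<lambda>n. \<bar>a\<bar> * s n + \<bar>b\<bar> * t n) at_top sequentially"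
  proof (cases "a = 0")
    case False
    then have "s n \<le> \<bar>a\<bar> * s n + \<bar>b\<bar> * t n" for n
      using s(2)[of n] t(2)[of n] by (simp add: add_increasing2 mult_le_cancel_right1)
    then show ?thesis by (intro filterlim_at_top_mono[OF s(1)] always_eventually) simp
  next
    case True
    then have "b \<noteq> 0" using ab(2) by simp
    then have "t n \<le> \<bar>a\<bar> * s n + \<bar>b\<bar> * t n" for n
      using s(2)[of n] t(2)[of n] by (simp add: add_increasing mult_le_cancel_right1)
    then show ?thesis by (intro filterlim_at_top_mono[OF t(1)] always_eventually) simp
  qed
  then show ?thesis
    by (intro filterlim_at_infinity_imp_not_convergent filterlim_norm_at_top_imp_at_infinity)
      (simp add: abs_eq)
qed

lemma opposite_signs_coprime_weight:
  fixes a b :: int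
  assumes "a * b < 0"
  obtains A g where "A \<in> N0sq" "g \<noteq> 0"
    "real_of_int a = g * real (snd A)" "real_of_int b = - g * real (fst A)"
proof -
  define P Q where "P = nat \<bar>a\<bar>" and "Q = nat \<bar>b\<bar>"
  define d where "d = gcd P Q"
  have PQ: "0 < P" "0 < Q" using assms by (auto simp: P_def Q_def)
  then have d: "0 < d" by (simp add: d_def)
  have A: "(Q div d, P div d) \<in> N0sq"
    using PQ div_gcd_coprime[of Q P]
    by (auto simp: N0sq_def d_def gcd.commute Suc_le_eq div_greater_zero_iff)
  have "real P = real d * real (P div d)" "real Q = real d * real (Q div d)"
    by (simp_all add: d_def flip: of_nat_mult)
  moreover have "real_of_int a = sgn a * P" "real_of_int b = - sgn a * Q"
    using assms by (auto simp: P_def Q_def sgn_if mult_less_0_iff)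
  ultimately show ?thesis
    using d assms by (intro that[OF A, of "sgn a * d"]) (auto simp: sgn_if mult_less_0_iff)
qed

lemma weighted_parametrization:
  fixes X Y :: "nat \<Rightarrow> real" and A1 A2 :: nat
  assumes X: "X \<longlonglongrightarrow> 0" "\<And>n. X n \<noteq> 0" and Y: "\<And>n. Y n \<noteq> 0"
    and sgn: "\<And>n. sgn (X n) = \<sigma>" "\<And>n. sgn (Y n) = \<tau>" and A1: "1 \<le> A1"
    and lim: "(\<lambda>n. A1 * ln (\<bar>Y n\<bar>) - A2 * ln \<bar>X n\<bar>) \<longlonglongrightarrow> L"
  obtains l y where "l \<longlonglongrightarrow> 0" "\<And>n. 0 < l n" "y \<longlonglongrightarrow> \<tau> * exp (L / A1)"
    "\<And>n. X n = l n ^ A1 * \<sigma>" "\<And>n. Y n = l n ^ A2 * y n"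
proof
  define l where "l n = \<bar>X n\<bar> powr (1 / A1)" for n
  show l_pos: "0 < l n" for n using X(2) by (simp add: l_def)
  have l_pow: "l n ^ m = \<bar>X n\<bar> powr (m / A1)" for n m
    using l_pos by (simp add: l_def powr_powr flip: powr_realpow)
  show "l \<longlonglongrightarrow> 0"
    unfolding l_def using X A1 by (intro tendsto_zero_powrI) (auto simp: tendsto_rabs_zero_iff)
  show "X n = l n ^ A1 * \<sigma>" for n
    using l_pow[of n A1] A1 X(2) sgn_mult_abs[of "X n"] sgn(1)[of n] by (simp add: mult.commute)
  define y where "y n = Y n / l n ^ A2" for n
  show "Y n = l n ^ A2 * y n" for n using l_pos[of n] by (simp add: y_def)
  have "y n = \<tau> * exp ((A1 * ln (\<bar>Y n\<bar>) - A2 * ln \<bar>X n\<bar>) / A1)" for n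
  proof -
    have "Y n = \<tau> * exp (ln \<bar>Y n\<bar>)" using Y sgn_mult_abs[of "Y n"] sgn(2)[of n] by simp
    moreover have "l n ^ A2 = exp (A2 / A1 * ln \<bar>X n\<bar>)"
      using l_pow[of n A2] X(2) by (simp add: powr_def)
    ultimately show ?thesis using A1 by (simp add: y_def diff_divide_distrib exp_diff)
  qed
  then have y_eq: "y = (\<lambda>n. \<tau> * exp ((A1 * ln (\<bar>Y n\<bar>) - A2 * ln \<bar>X n\<bar>) / A1))" ..
  show "y \<longlonglongrightarrow> \<tau> * exp (L / A1)"
    unfolding y_eq by (intro tendsto_intros lim) (use A1 in simp)
qed

text \<open>The bounds \<open>\<bar>X n\<bar> < 1\<close>, \<open>\<bar>Y n\<bar> < 1\<close> make the logarithmic weights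
  \<open>- ln \<bar>X n\<bar>\<close>, \<open>- ln \<bar>Y n\<bar>\<close> positive.\<close>

definition neg_seq :: "(nat \<times> nat \<Rightarrow> real) \<Rightarrow> (nat \<Rightarrow> real) \<Rightarrow> (nat \<Rightarrow> real) \<Rightarrow> bool" where
  "neg_seq c X Y \<longleftrightarrow>
     (\<forall>n. X n \<noteq> 0 \<and> Y n \<noteq> 0 \<and> \<bar>X n\<bar> < 1 \<and> \<bar>Y n\<bar> < 1 \<and> peval c (X n) (Y n) < 0)
     \<and> X \<longlonglongrightarrow> 0 \<and> Y \<longlonglongrightarrow> 0"

definition neg_log_mono :: "(nat \<Rightarrow> real) \<Rightarrow> (nat \<Rightarrow> real) \<Rightarrow> nat \<times> nat \<Rightarrow> nat \<Rightarrow> real" where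
  "neg_log_mono X Y k n = real (fst k) * - ln \<bar>X n\<bar> + real (snd k) * - ln \<bar>Y n\<bar>"

lemma exp_neg_log_mono:
  "X n \<noteq> 0 \<Longrightarrow> Y n \<noteq> 0 \<Longrightarrow> exp (- neg_log_mono X Y k n) = \<bar>X n\<bar> ^ fst k * \<bar>Y n\<bar> ^ snd k"
  by (simp add: neg_log_mono_def exp_add exp_of_nat_mult)

lemma tendsto_peval_minus_dominant_term:
  assumes fin: "finite (supp2 c)" and k0: "k0 \<in> supp2 c" and XY: "\<And>n. X n \<noteq> 0" "\<And>n. Y n \<noteq> 0"
    and small: "\<And>k. k \<in> supp2 c \<Longrightarrow> k \<noteq> k0 \<Longrightarrow>
                  (\<lambda>n. exp (neg_log_mono X Y k0 n - neg_log_mono X Y k n)) \<longlonglongrightarrow> 0"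
  shows "(\<lambda>n. (peval c (X n) (Y n) - c k0 * X n ^ fst k0 * Y n ^ snd k0) / exp (- neg_log_mono X Y k0 n))
           \<longlonglongrightarrow> 0"
proof -
  let ?L = "neg_log_mono X Y"
  let ?t = "\<lambda>k n. c k * X n ^ fst k * Y n ^ snd k / exp (- ?L k0 n)"
  have "?t k \<longlonglongrightarrow> 0" if "k \<in> supp2 c - {k0}" for k
  proof (rule tendsto_rabs_zero_cancel)
    have "\<bar>?t k n\<bar> = \<bar>c k\<bar> * exp (?L k0 n - ?L k n)" for n
    proof -
      have "\<bar>?t k n\<bar> = \<bar>c k\<bar> * (exp (- ?L k n) / exp (- ?L k0 n))"
        using XY by (simp add: exp_neg_log_mono abs_mult power_abs)
      also have "exp (- ?L k n) / exp (- ?L k0 n) = exp (?L k0 n - ?L k n)"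
        by (simp add: exp_diff[symmetric])
      finally show ?thesis .
    qed
    then show "(\<lambda>n. \<bar>?t k n\<bar>) \<longlonglongrightarrow> 0"
      using tendsto_mult_right_zero[OF small, of k "\<bar>c k\<bar>"] that by simp
  qed
  then have "(\<lambda>n. \<Sum>k\<in>supp2 c - {k0}. ?t k n) \<longlonglongrightarrow> (\<Sum>k\<in>supp2 c - {k0}. 0)"
    by (intro tendsto_sum)
  moreover have "(peval c (X n) (Y n) - c k0 * X n ^ fst k0 * Y n ^ snd k0) / exp (- ?L k0 n)
      = (\<Sum>k\<in>supp2 c - {k0}. ?t k n)" for n
    unfolding peval_def sum.remove[OF fin k0] by (simp add: sum_divide_distrib)
  ultimately show ?thesis by simp
qed

lemma neg_seq_comp: "neg_seq c X Y \<Longrightarrow> strict_mono r \<Longrightarrow> neg_seq c (X \<circ> r) (Y \<circ> r)"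
  by (auto simp: neg_seq_def intro: LIMSEQ_subseq_LIMSEQ)

lemma not_local_min_origin_imp_neg_seq:
  assumes zero: "peval c 0 0 = 0" and not_min: "\<not> local_min_origin c"
  obtains X Y where "neg_seq c X Y"
proof -
  have "\<exists>w. fst w \<noteq> 0 \<and> snd w \<noteq> 0 \<and> norm w < inverse (Suc n) \<and> peval c (fst w) (snd w) < 0" for n
  proof -
    have "\<not> (\<forall>z. dist z 0 < inverse (Suc n) \<longrightarrow> 0 \<le> peval c (fst z) (snd z))"
      using not_min unfolding local_min_origin_def zero eventually_nhds_metric zero_prod_def[symmetric]
      by (metis of_nat_0_less_iff positive_imp_inverse_positive zero_less_Suc)
    then obtain z where z: "norm z < inverse (Suc n)" "peval c (fst z) (snd z) < 0"
      by (auto simp: dist_norm)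
    obtain w where "fst w \<noteq> 0" "snd w \<noteq> 0" "dist w z < inverse (Suc n) - norm z"
      "peval c (fst w) (snd w) < 0"
      using off_axes_near_negative[OF continuous_on_peval z(2)] z(1) by (metis diff_gt_0_iff_gt)
    moreover have "norm w \<le> dist w z + norm z"
      using norm_triangle_sub[of w z] by (simp add: dist_norm)
    ultimately show ?thesis by fastforce
  qed
  then obtain W where W: "\<And>n. fst (W n) \<noteq> 0 \<and> snd (W n) \<noteq> 0 \<and> norm (W n) < inverse (Suc n)
      \<and> peval c (fst (W n)) (snd (W n)) < 0"
    by metis
  have small: "\<bar>fst (W n)\<bar> < inverse (Suc n)" "\<bar>snd (W n)\<bar> < inverse (Suc n)" for n
    using W[of n] norm_fst_le[of "fst (W n)" "snd (W n)"] norm_snd_le[of "snd (W n)" "fst (W n)"]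
    by (auto simp del: of_nat_Suc)
  have le1: "inverse (real (Suc n)) \<le> 1" for n by (simp add: inverse_le_1_iff)
  have "(\<lambda>n. fst (W n)) \<longlonglongrightarrow> 0" "(\<lambda>n. snd (W n)) \<longlonglongrightarrow> 0"
    using small
    by (auto intro!: Lim_null_comparison[OF _ LIMSEQ_inverse_real_of_nat] always_eventually less_imp_le)
  moreover have "\<bar>fst (W n)\<bar> < 1" "\<bar>snd (W n)\<bar> < 1" for n
    using small[of n] le1[of n] by linarith+
  ultimately have "neg_seq c (\<lambda>n. fst (W n)) (\<lambda>n. snd (W n))"
    using W by (simp add: neg_seq_def)
  then show ?thesis by (rule that)
qed

lemma neg_seq_extract:
  assumes fin: "finite (supp2 c)" and seq: "neg_seq c X Y"
  obtains X' Y' k0 \<sigma> \<tau> where "neg_seq c X' Y'" "k0 \<in> supp2 c"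
    "\<And>n. sgn (X' n) = \<sigma>" "\<And>n. sgn (Y' n) = \<tau>"
    "\<And>k. k \<in> supp2 c \<Longrightarrow> convergent (\<lambda>n. exp (neg_log_mono X' Y' k0 n - neg_log_mono X' Y' k n))"
proof -
  have ne: "supp2 c \<noteq> {}" using seq by (force simp: neg_seq_def peval_def)
  define km where "km n = arg_min_on (\<lambda>k. neg_log_mono X Y k n) (supp2 c)" for n
  have km: "km n \<in> supp2 c" for n
    unfolding km_def by (rule arg_min_if_finite(1)[OF fin ne])
  have km_min: "neg_log_mono X Y (km n) n \<le> neg_log_mono X Y k n" if "k \<in> supp2 c" for n k
    unfolding km_def by (rule arg_min_least[OF fin ne that])
  define h where "h n = (km n, sgn (X n), sgn (Y n))" for n
  have "finite (range (sgn :: real \<Rightarrow> real))"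
    by (rule finite_subset[of _ "{-1, 0, 1}"]) (auto simp: sgn_real_def)
  then have "finite (supp2 c \<times> range (sgn :: real \<Rightarrow> real) \<times> range (sgn :: real \<Rightarrow> real))"
    using fin by simp
  then have "finite (range h)" by (rule finite_subset[rotated]) (auto simp: h_def km)
  then obtain r :: "nat \<Rightarrow> nat" and v where r: "strict_mono r" "\<And>n. h (r n) = v"
    using constant_subseq_of_finite_range by blast
  obtain k0 \<sigma> \<tau> where v: "v = (k0, \<sigma>, \<tau>)" by (cases v)
  have r_const: "km (r n) = k0" "sgn (X (r n)) = \<sigma>" "sgn (Y (r n)) = \<tau>" for n
    using r(2)[of n] by (simp_all add: h_def v)
  let ?ratio = "\<lambda>k n. exp (neg_log_mono X Y k0 (r n) - neg_log_mono X Y k (r n))"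
  have bdd: "\<forall>k\<in>supp2 c. bounded (range (?ratio k))"
  proof
    fix k assume "k \<in> supp2 c"
    then have "norm (?ratio k n) \<le> 1" for n using km_min[of k "r n"] by (simp add: r_const)
    then show "bounded (range (?ratio k))" by (intro boundedI) blast
  qed
  obtain r' where r': "strict_mono r'" "\<forall>k\<in>supp2 c. convergent (?ratio k \<circ> r')"
    using convergent_subseq_of_bounded_family[OF fin bdd] by blast
  show ?thesis
  proof (rule that)
    show "neg_seq c (X \<circ> (r \<circ> r')) (Y \<circ> (r \<circ> r'))"
      using seq r(1) r'(1) by (intro neg_seq_comp strict_mono_o)
    show "k0 \<in> supp2 c" using km r_const(1) by metis
    show "sgn ((X \<circ> (r \<circ> r')) n) = \<sigma>" "sgn ((Y \<circ> (r \<circ> r')) n) = \<tau>" for n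
      using r_const by simp_all
    show "convergent (\<lambda>n. exp (neg_log_mono (X \<circ> (r \<circ> r')) (Y \<circ> (r \<circ> r')) k0 n
        - neg_log_mono (X \<circ> (r \<circ> r')) (Y \<circ> (r \<circ> r')) k n))" if "k \<in> supp2 c" for k
      using r'(2) that by (simp add: neg_log_mono_def o_def)
  qed
qed

lemma neg_seq_dominant_imp_lower_vertex:
  assumes fin: "finite (supp2 c)" and seq: "neg_seq c X Y" and k0: "k0 \<in> supp2 c"
    and small: "\<And>k. k \<in> supp2 c \<Longrightarrow> k \<noteq> k0 \<Longrightarrow>
                  (\<lambda>n. exp (neg_log_mono X Y k0 n - neg_log_mono X Y k n)) \<longlonglongrightarrow> 0"
  shows "lower_vertex c k0"
proof -
  let ?L = "neg_log_mono X Y"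
  have "\<forall>\<^sub>F n in sequentially. \<forall>k\<in>supp2 c - {k0}. exp (?L k0 n - ?L k n) < 1"
  proof (rule eventually_ball_finite)
    show "\<forall>k\<in>supp2 c - {k0}. \<forall>\<^sub>F n in sequentially. exp (?L k0 n - ?L k n) < 1"
    proof
      fix k assume "k \<in> supp2 c - {k0}"
      then have "(\<lambda>n. exp (?L k0 n - ?L k n)) \<longlonglongrightarrow> 0" using small by simp
      from order_tendstoD(2)[OF this zero_less_one]
      show "\<forall>\<^sub>F n in sequentially. exp (?L k0 n - ?L k n) < 1" .
    qed
  qed (simp add: fin)
  then obtain n where n: "\<And>k. k \<in> supp2 c - {k0} \<Longrightarrow> exp (?L k0 n - ?L k n) < 1"
    using eventually_happens'[OF sequentially_bot] by blast
  text \<open>The logarithmic sizes of \<open>X n\<close> and \<open>Y n\<close> are weights for which \<open>k0\<close> is the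
    unique minimiser.\<close>
  show ?thesis
  proof (rule lower_vertex_of_real_weights[OF fin k0])
    show "0 < - ln \<bar>X n\<bar>" "0 < - ln \<bar>Y n\<bar>" using seq by (simp_all add: neg_seq_def)
    show "real (fst k0) * - ln \<bar>X n\<bar> + real (snd k0) * - ln \<bar>Y n\<bar>
        < real (fst k) * - ln \<bar>X n\<bar> + real (snd k) * - ln \<bar>Y n\<bar>"
      if "k \<in> supp2 c" "k \<noteq> k0" for k
      using n[of k] that by (simp add: neg_log_mono_def)
  qed
qed

lemma neg_seq_ratio_limit_imp_edge:
  assumes seq: "neg_seq c X Y" and "k1 \<noteq> k0" and "0 < \<rho>"
    and ratio: "(\<lambda>n. exp (neg_log_mono X Y k0 n - neg_log_mono X Y k1 n)) \<longlonglongrightarrow> \<rho>"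
  obtains A L where "A \<in> N0sq" "(\<lambda>n. real (fst A) * ln (\<bar>Y n\<bar>) - real (snd A) * ln \<bar>X n\<bar>) \<longlonglongrightarrow> L"
proof -
  define s t where "s n = - ln \<bar>X n\<bar>" and "t n = - ln \<bar>Y n\<bar>" for n
  define a b where "a = int (fst k1) - int (fst k0)" and "b = int (snd k1) - int (snd k0)"
  define ell where "ell n = a * s n + b * t n" for n
  have "neg_log_mono X Y k0 n - neg_log_mono X Y k1 n = - ell n" for n
    by (simp add: ell_def neg_log_mono_def a_def b_def s_def t_def algebra_simps)
  then have "(\<lambda>n. - ell n) \<longlonglongrightarrow> ln \<rho>"
    using tendsto_ln[OF ratio] \<open>0 < \<rho>\<close> by simp
  then have ell: "ell \<longlonglongrightarrow> - ln \<rho>"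
    using tendsto_minus by fastforce
  have XY: "X \<longlonglongrightarrow> 0" "Y \<longlonglongrightarrow> 0" "X n \<noteq> 0" "Y n \<noteq> 0" "\<bar>X n\<bar> < 1" "\<bar>Y n\<bar> < 1" for n
    using seq by (auto simp: neg_seq_def)
  consider "0 \<le> a * b" | "a * b < 0" by linarith
  then show ?thesis
  proof cases
    case 1
    have "(a, b) \<noteq> (0, 0)" using \<open>k1 \<noteq> k0\<close> by (auto simp: a_def b_def prod_eq_iff)
    moreover have "filterlim s at_top sequentially" "filterlim t at_top sequentially"
      unfolding s_def t_def using XY(1-4) by (blast intro: filterlim_neg_ln_abs_at_top)+
    moreover have "0 < s n" "0 < t n" for n using XY(3-6)[of n] by (simp_all add: s_def t_def)
    ultimately have "\<not> convergent ell"
      unfolding ell_def using 1 by (intro same_sign_comb_not_convergent)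
    with ell show ?thesis by (auto simp: convergent_def)
  next
    case 2
    then obtain A g where A: "A \<in> N0sq" "g \<noteq> 0"
      and ab: "real_of_int a = g * real (snd A)" "real_of_int b = - g * real (fst A)"
      by (rule opposite_signs_coprime_weight)
    have "ell n = g * (real (fst A) * ln (\<bar>Y n\<bar>) - real (snd A) * ln \<bar>X n\<bar>)" for n
      by (simp add: ell_def ab s_def t_def algebra_simps)
    then have "(\<lambda>n. real (fst A) * ln (\<bar>Y n\<bar>) - real (snd A) * ln \<bar>X n\<bar>) = (\<lambda>n. ell n / g)"
      using A(2) by simp
    moreover have "(\<lambda>n. ell n / g) \<longlonglongrightarrow> - ln \<rho> / g"
      by (rule tendsto_divide[OF ell tendsto_const]) (use A(2) in simp)
    ultimately show ?thesis using that[OF A(1)] by simp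
  qed
qed

section \<open>Local minimality\<close>

context nonneg_main_forms
begin

lemma neg_seq_vertex_absurd:
  assumes seq: "neg_seq c X Y" and k0: "k0 \<in> supp2 c"
    and small: "\<And>k. k \<in> supp2 c \<Longrightarrow> k \<noteq> k0 \<Longrightarrow>
                  (\<lambda>n. exp (neg_log_mono X Y k0 n - neg_log_mono X Y k n)) \<longlonglongrightarrow> 0"
  shows False
proof -
  let ?m = "\<lambda>n. exp (- neg_log_mono X Y k0 n)"
  have XY: "X n \<noteq> 0" "Y n \<noteq> 0" "peval c (X n) (Y n) < 0" for n
    using seq by (auto simp: neg_seq_def)
  have pos_even: "0 < c k0" "even (fst k0)" "even (snd k0)"
    using lower_vertex_pos_even neg_seq_dominant_imp_lower_vertex[OF finite_supp2 seq k0 small]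
    by blast+
  have mono_eq: "X n ^ fst k0 * Y n ^ snd k0 = ?m n" for n
    using XY pos_even(2,3) by (simp add: exp_neg_log_mono power_even_abs)
  have "(\<lambda>n. peval c (X n) (Y n) / ?m n - c k0) \<longlonglongrightarrow> 0"
    using tendsto_peval_minus_dominant_term[OF finite_supp2 k0 XY(1,2) small]
    by (simp add: diff_divide_distrib mult.assoc mono_eq)
  then have "(\<lambda>n. peval c (X n) (Y n) / ?m n) \<longlonglongrightarrow> c k0"
    by (rule LIM_zero_cancel)
  then have "\<forall>\<^sub>F n in sequentially. 0 < peval c (X n) (Y n) / ?m n"
    using pos_even(1) by (rule order_tendstoD)
  moreover have "\<forall>\<^sub>F n in sequentially. peval c (X n) (Y n) / ?m n < 0"
    using XY(3) by (intro always_eventually allI divide_neg_pos) simp_all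
  ultimately have "\<forall>\<^sub>F n in sequentially. False"
    by eventually_elim simp
  then show False by simp
qed

lemma neg_seq_edge_absurd:
  assumes C2: "\<forall>A\<in>calA c. C2 c A" and seq: "neg_seq c X Y" and A: "A \<in> N0sq"
    and sgn: "\<And>n. sgn (X n) = \<sigma>" "\<And>n. sgn (Y n) = \<tau>"
    and lim: "(\<lambda>n. real (fst A) * ln (\<bar>Y n\<bar>) - real (snd A) * ln \<bar>X n\<bar>) \<longlonglongrightarrow> L"
  shows False
proof -
  have XY: "X \<longlonglongrightarrow> 0" "X n \<noteq> 0" "Y n \<noteq> 0" "peval c (X n) (Y n) < 0" for n
    using seq by (auto simp: neg_seq_def)
  have A1: "1 \<le> fst A" and A2: "1 \<le> snd A" using A by (auto simp: N0sq_def)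
  obtain l y where l: "l \<longlonglongrightarrow> 0" "\<And>n. 0 < l n" and y: "y \<longlonglongrightarrow> \<tau> * exp (L / fst A)"
    and X_eq: "\<And>n. X n = l n ^ fst A * \<sigma>" and Y_eq: "\<And>n. Y n = l n ^ snd A * y n"
    using weighted_parametrization[OF XY(1,2,3) sgn A1 lim] by blast
  define y0 where "y0 = \<tau> * exp (L / fst A)"
  have "\<sigma> \<noteq> 0" "y0 \<noteq> 0" using sgn[of 0] XY(2,3)[of 0] by (auto simp: y0_def sgn_0_0)
  have p_eq: "peval c (X n) (Y n) = peval c (l n ^ fst A * \<sigma>) (l n ^ snd A * y n)" for n
    by (simp add: X_eq Y_eq mult.commute)
  have "peval c (l n ^ fst A * \<sigma>) (l n ^ snd A * y n) < 0" for n
    using XY(4)[of n] by (simp add: p_eq)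
  then have "peval (main_form c A) \<sigma> y0 = 0"
    unfolding y0_def by (rule main_form_zero_of_neg_along_curve[OF A1 A2 l y])
  moreover have "supp2 c \<noteq> {}" using XY(4)[of 0] by (auto simp: peval_def)
  ultimately have "A \<in> calA c" "peval (phi_form c A 0) \<sigma> y0 = 0"
    using main_form_zero_imp_calA[OF A _ \<open>\<sigma> \<noteq> 0\<close> \<open>y0 \<noteq> 0\<close>]
    by (simp_all add: phi_form_0_eq_main_form[OF finite_supp2])
  with C2 have pos: "0 < peval (phi_form c A 1) \<sigma> y0"
    using \<open>\<sigma> \<noteq> 0\<close> \<open>y0 \<noteq> 0\<close> by (auto simp: C2_def)
  show False
  proof (cases "1 < length (levels c A)")
    case False
    then have "main_form c A = c" by (intro main_form_eq_self[OF finite_supp2]) simp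
    then show False using main_form_nonneg[OF A1 A2, of "X 0" "Y 0"] XY(4)[of 0] by simp
  next
    case True
    then have "\<forall>\<^sub>F n in sequentially. 0 < peval c (X n) (Y n)"
      unfolding p_eq using eventually_pos_of_second_level_pos[OF _ A1 A2 l y] pos
      by (simp add: y0_def)
    moreover have "\<forall>\<^sub>F n in sequentially. peval c (X n) (Y n) < 0"
      using XY(4) by simp
    ultimately have "\<forall>\<^sub>F n in sequentially. False"
      by eventually_elim simp
    then show False by simp
  qed
qed

lemma neg_seq_absurd_of_convergent_ratios:
  assumes C2: "\<forall>A\<in>calA c. C2 c A" and seq: "neg_seq c X Y" and k0: "k0 \<in> supp2 c"
    and sgn: "\<And>n. sgn (X n) = \<sigma>" "\<And>n. sgn (Y n) = \<tau>"
    and conv: "\<And>k. k \<in> supp2 c \<Longrightarrow> convergent (\<lambda>n. exp (neg_log_mono X Y k0 n - neg_log_mono X Y k n))"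
  shows False
proof (cases "\<forall>k\<in>supp2 c - {k0}. lim (\<lambda>n. exp (neg_log_mono X Y k0 n - neg_log_mono X Y k n)) = 0")
  case True
  show False
  proof (rule neg_seq_vertex_absurd[OF seq k0])
    fix k assume "k \<in> supp2 c" "k \<noteq> k0"
    with True conv[of k]
    show "(\<lambda>n. exp (neg_log_mono X Y k0 n - neg_log_mono X Y k n)) \<longlonglongrightarrow> 0"
      by (simp add: convergent_LIMSEQ_iff)
  qed
next
  case False
  then obtain k1 where k1: "k1 \<in> supp2 c" "k1 \<noteq> k0"
    and "lim (\<lambda>n. exp (neg_log_mono X Y k0 n - neg_log_mono X Y k1 n)) \<noteq> 0" by blast
  moreover define \<rho> where "\<rho> = lim (\<lambda>n. exp (neg_log_mono X Y k0 n - neg_log_mono X Y k1 n))"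
  ultimately have "\<rho> \<noteq> 0"
    and ratio: "(\<lambda>n. exp (neg_log_mono X Y k0 n - neg_log_mono X Y k1 n)) \<longlonglongrightarrow> \<rho>"
    using conv[of k1] by (simp_all add: convergent_LIMSEQ_iff)
  have "0 \<le> \<rho>" by (rule tendsto_lowerbound[OF ratio]) (auto intro: always_eventually less_imp_le)
  with \<open>\<rho> \<noteq> 0\<close> have "0 < \<rho>" by simp
  then obtain A L where "A \<in> N0sq"
    "(\<lambda>n. real (fst A) * ln (\<bar>Y n\<bar>) - real (snd A) * ln \<bar>X n\<bar>) \<longlonglongrightarrow> L"
    using neg_seq_ratio_limit_imp_edge[OF seq k1(2) _ ratio] by blast
  then show False by (intro neg_seq_edge_absurd[OF C2 seq _ sgn])
qed

lemma C2_imp_local_min_origin: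
  assumes zero: "peval c 0 0 = 0" and C2: "\<forall>A\<in>calA c. C2 c A"
  shows "local_min_origin c"
proof (rule ccontr)
  assume "\<not> local_min_origin c"
  then obtain X Y where "neg_seq c X Y" using zero by (auto elim: not_local_min_origin_imp_neg_seq)
  then obtain X' Y' k0 \<sigma> \<tau> where "neg_seq c X' Y'" "k0 \<in> supp2 c"
    "\<And>n. sgn (X' n) = \<sigma>" "\<And>n. sgn (Y' n) = \<tau>"
    "\<And>k. k \<in> supp2 c \<Longrightarrow> convergent (\<lambda>n. exp (neg_log_mono X' Y' k0 n - neg_log_mono X' Y' k n))"
    using neg_seq_extract[OF finite_supp2] by blast
  then show False by (rule neg_seq_absurd_of_convergent_ratios[OF C2])
qed

end

theorem theorem3:
  fixes c :: "nat \<times> nat \<Rightarrow> real"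
  assumes poly: "is_poly2 c"
    and zero: "peval c 0 0 = 0"
    and grad_x: "((\<lambda>x. peval c x 0) has_real_derivative 0) (at 0)"
    and grad_y: "((\<lambda>y. peval c 0 y) has_real_derivative 0) (at 0)"
    and dim2: "aff_dim (newton_polygon c) = 2"
    and main_nonneg: "\<forall>A1 A2 x y. A1 \<ge> 1 \<and> A2 \<ge> 1 \<longrightarrow> peval (main_form c (A1, A2)) x y \<ge> 0"
  shows "(calA c = {} \<longrightarrow> local_min_origin c)
       \<and> ((\<exists>A\<in>calA c. C1 c A) \<longrightarrow> \<not> local_min_origin c)
       \<and> (calA c \<noteq> {} \<and> (\<forall>A\<in>calA c. \<not> C1 c A \<and> C2 c A) \<longrightarrow> local_min_origin c)"
proof -
  have fin: "finite (supp2 c)" using poly by (simp add: is_poly2_def)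
  interpret nonneg_main_forms c
  proof
    show "0 \<le> peval (main_form c A) x y" if "1 \<le> fst A" "1 \<le> snd A" for A x y
      using main_nonneg that by (cases A) simp
  qed (fact fin)
  have "local_min_origin c" if "\<forall>A\<in>calA c. C2 c A"
    using C2_imp_local_min_origin[OF zero that] .
  moreover have "\<not> local_min_origin c" if "A \<in> calA c" "C1 c A" for A
    using C1_imp_not_local_min_origin[OF fin zero _ _ that(2)] that(1)
    by (simp add: calA_def N0sq_def)
  ultimately show ?thesis by blast
qed

end
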